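(* For every nonzero limit ordinal $\alpha$, the structure $\mathrm{WS}(\omega^\alpha,<,\psi)$ is interpretable in $\mathrm{HF}(\alpha,<)$.
   Context: $\psi$ on ordinals: $\psi(0)=\omega$; if $\beta=\omega^{\beta_1}+\dots+\omega^{\beta_n}$ in Cantor normal form ($n\ge1$, $\beta_1\ge\dots\ge\beta_n$), $\psi(\beta)=\omega^{\beta_1}+\dots+\omega^{\beta_{n-1}}+\omega^{\beta_n+1}$. $(\gamma,<,\psi)$ is the structure on the ordinals below $\gamma$ with the usual order and $\psi$ (restricted). For a structure $\mathfrak{A}$ with domain $X$, $\mathrm{WS}(\mathfrak{A})$ is the two-sorted structure consisting of $\mathfrak{A}$ plus a second sort of all finite subsets of $X$ with the membership relation. For a relational structure $\mathfrak{A}$ with domain $A$, $\mathrm{HF}(\mathfrak{A})$ has domain $A^+$, the least set with $A\times\{\omega\}\subseteq A^+$ and every finite subset of $A^+$ belonging to $A^+$ (pairs in the Kuratowski sense, ordinals von Neumann); atoms are the elements $\pi(a)=(a,\omega)$, $a\in A$; its signature is that of $\mathfrak{A}$ (each relation holding exactly on tuples of atoms $\pi(a_1),\dots,\pi(a_n)$ with $\mathfrak{A}\models P(a_1,\dots,a_n)$) plus a unary predicate $\mathrm{At}$ true exactly of atoms and a binary $\in$ with $x\in y$ iff $y$ is not an atom and $x$ is a set-theoretic element of $y$. A many-sorted structure $\mathfrak{M}$ is interpretable in $\mathfrak{N}$ if each sort of $\mathfrak{M}$ is assigned a sort of $\mathfrak{N}$ and an injection of the domain into it, such that the image of each domain and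 the image of each relation and of the graph of each function of $\mathfrak{M}$ is first-order definable in $\mathfrak{N}$. *)

theory Defs
  imports Main "HOL-Library.FSet"
begin

text \<open>The ordinal alpha is the order type of a well-ordered HOL type 'a.
  An ordinal beta < omega^alpha is represented by the list [beta_1,...,beta_n] of
  exponents (elements of 'a, i.e. ordinals < alpha) of its Cantor normal form
  omega^beta_1 + ... + omega^beta_n, with beta_1 >= ... >= beta_n; the empty list is 0.\<close>

definition cnf :: "'a::linorder list \<Rightarrow> bool" where
  "cnf xs \<longleftrightarrow> sorted_wrt (\<lambda>x y. y \<le> x) xs"

definition omega_pow :: "'a::linorder list set" where
  "omega_pow = {xs. cnf xs}"

text \<open>Ordinal order on Cantor normal forms: lexicographic, a proper prefix being smaller.\<close>
definition cnf_less :: "'a::linorder list \<Rightarrow> 'a list \<Rightarrow> bool" where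
  "cnf_less xs ys \<longleftrightarrow> (xs, ys) \<in> lexord {(a, b). a < b}"

definition osucc :: "'a::wellorder \<Rightarrow> 'a" where
  "osucc b = (LEAST c. b < c)"

definition ozero :: "'a::wellorder" where
  "ozero = (LEAST c. True)"

text \<open>Ordinal sum of two Cantor normal forms: the terms of the first summand that are
  smaller than the leading term of the second one are absorbed.\<close>
definition cnf_plus :: "'a::linorder list \<Rightarrow> 'a list \<Rightarrow> 'a list" where
  "cnf_plus xs ys = (case ys of [] \<Rightarrow> xs | y # _ \<Rightarrow> filter (\<lambda>c. y \<le> c) xs @ ys)"

text \<open>psi(0) = omega = omega^1;
  psi(omega^b1+...+omega^bn) = omega^b1+...+omega^b(n-1) + omega^(bn+1) (ordinal sum).\<close>
definition psi :: "'a::wellorder list \<Rightarrow> 'a list" where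
  "psi xs = (if xs = [] then [osucc ozero]
             else cnf_plus (butlast xs) [osucc (last xs)])"

datatype 'a hf = Atom 'a | HSet "'a hf fset"

fun hf_mem :: "'a hf \<Rightarrow> 'a hf \<Rightarrow> bool" where
  "hf_mem x (Atom a) = False"
| "hf_mem x (HSet s) = (x |\<in>| s)"

fun hf_at :: "'a hf \<Rightarrow> bool" where
  "hf_at (Atom a) = True"
| "hf_at (HSet s) = False"

fun hf_less :: "'a::ord hf \<Rightarrow> 'a hf \<Rightarrow> bool" where
  "hf_less (Atom a) (Atom b) = (a < b)"
| "hf_less _ _ = False"

datatype hf_fm =
    FLess nat nat | FAt nat | FMem nat nat | FEq nat nat
  | FNeg hf_fm | FConj hf_fm hf_fm | FEx nat hf_fm

fun hf_sat :: "(nat \<Rightarrow> 'a::ord hf) \<Rightarrow> hf_fm \<Rightarrow> bool" where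
  "hf_sat e (FLess i j) = hf_less (e i) (e j)"
| "hf_sat e (FAt i) = hf_at (e i)"
| "hf_sat e (FMem i j) = hf_mem (e i) (e j)"
| "hf_sat e (FEq i j) = (e i = e j)"
| "hf_sat e (FNeg \<phi>) = (\<not> hf_sat e \<phi>)"
| "hf_sat e (FConj \<phi> \<psi>) = (hf_sat e \<phi> \<and> hf_sat e \<psi>)"
| "hf_sat e (FEx v \<phi>) = (\<exists>x. hf_sat (e(v := x)) \<phi>)"

definition hf_definable :: "nat \<Rightarrow> 'a::ord hf list set \<Rightarrow> bool" where
  "hf_definable k R \<longleftrightarrow> (\<exists>\<phi>. \<forall>e. hf_sat e \<phi> \<longleftrightarrow> map e [0..<k] \<in> R)"

definition WS_psi_interpretable_in_HF :: "'a::wellorder itself \<Rightarrow> bool" where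
  "WS_psi_interpretable_in_HF _ \<longleftrightarrow>
    (\<exists>(f :: 'a list \<Rightarrow> 'a hf) (g :: 'a list set \<Rightarrow> 'a hf).
       inj_on f omega_pow \<and>
       inj_on g {S. finite S \<and> S \<subseteq> omega_pow} \<and>
       hf_definable 1 {[f x] | x. x \<in> omega_pow} \<and>
       hf_definable 1 {[g S] | S. finite S \<and> S \<subseteq> omega_pow} \<and>
       hf_definable 2 {[f x, f y] | x y. x \<in> omega_pow \<and> y \<in> omega_pow \<and> cnf_less x y} \<and>
       hf_definable 2 {[f x, f (psi x)] | x. x \<in> omega_pow} \<and>
       hf_definable 2 {[f x, g S] | x S. finite S \<and> S \<subseteq> omega_pow \<and> x \<in> S})"

end

theory Submission
  imports Defs "HOL-Library.Multiset_Order"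
begin

text \<open>An ordinal below \<omega>^\<alpha> is determined by the multiset of exponents in its Cantor normal
  form, and the ordinal order is the multiset order on these multisets. A multiset M of ordinals
  below \<alpha> is coded in HF(\<alpha>) by the set of its tokens a_0, ..., a_(M(a)-1), where a_0 = {a}
  and a_(i+1) = {a, a_i}: every token carries its exponent as its only atom and points to the
  previous copy, which makes the codes first-order recognisable. On codes, the multiset order
  becomes the Huet-Oppen condition "every token lost is dominated by a token gained", and \<psi>
  deletes the tokens whose exponent is the least one, \<beta>_n, and adds one new copy of \<beta>_n + 1;
  both are first-order in (HF, <, \<in>). A finite set of ordinals is coded by the finite set of
  their codes.\<close>

section \<open>Cantor normal forms as multisets of exponents\<close>

lemma cnf_iff_sorted_rev: "cnf xs \<longleftrightarrow> sorted (rev xs)"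
  by (simp add: cnf_def sorted_wrt_rev)

lemma cnf_eqI_mset:
  assumes "cnf xs" "cnf ys" "mset xs = mset ys"
  shows "xs = ys"
proof -
  have "sort (rev ys) = rev xs"
    using assms by (intro properties_for_sort) (simp_all add: cnf_iff_sorted_rev)
  then show ?thesis
    using assms(2) by (simp add: cnf_iff_sorted_rev sorted_sort_id)
qed

lemma ex_cnf_mset: "\<exists>xs. cnf xs \<and> mset xs = M"
  by (rule exI[of _ "rev (sorted_list_of_multiset M)"]) (simp add: cnf_iff_sorted_rev)

lemma cnf_less_imp_mset_less:
  assumes "cnf xs" and "cnf_less xs ys"
  shows "mset xs < mset ys"
proof -
  consider (prefix) a v where "ys = xs @ a # v"
    | (differ) u a b v w where "a < b" "xs = u @ a # v" "ys = u @ b # w"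
    using assms(2) by (auto simp: cnf_less_def lexord_def)
  then show ?thesis
  proof cases
    case prefix
    then show ?thesis by (simp add: less_multiset\<^sub>H\<^sub>O)
  next
    case differ
    \<comment> \<open>b exceeds every exponent of xs after the common prefix u,
      so its extra copy dominates all losses\<close>
    have below_b: "x < b" if "x \<in> set (a # v)" for x
      using assms(1) differ that by (auto simp: cnf_def sorted_wrt_append)
    then have "count (mset v) b = 0"
      by fastforce
    then have b_gains: "count (mset xs) b < count (mset ys) b"
      using differ by (auto simp del: count_mset_0_iff)
    have "y \<in> set (a # v)" if "count (mset ys) y < count (mset xs) y" for y
    proof (rule ccontr)
      assume "y \<notin> set (a # v)"
      then have "count (mset (a # v)) y = 0"
        by auto
      moreover have "count (mset xs) y = count (mset u) y + count (mset (a # v)) y"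
        using differ by (simp only: mset_append count_union)
      moreover have "count (mset u) y \<le> count (mset ys) y"
        using differ by simp
      ultimately show False
        using that by linarith
    qed
    then have "y < b" if "count (mset ys) y < count (mset xs) y" for y
      using that below_b by blast
    then show ?thesis
      using b_gains by (auto simp: less_multiset\<^sub>H\<^sub>O)
  qed
qed

lemma cnf_less_iff_mset_less:
  assumes "cnf xs" "cnf ys"
  shows "cnf_less xs ys \<longleftrightarrow> mset xs < mset ys"
proof
  assume "mset xs < mset ys"
  moreover have "xs = ys \<or> cnf_less xs ys \<or> cnf_less ys xs"
    unfolding cnf_less_def by (metis (mono_tags) lexord_linear case_prodI mem_Collect_eq neqE)
  ultimately show "cnf_less xs ys"
    using cnf_less_imp_mset_less[OF assms(2), of xs] by (auto dest: less_not_sym)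
qed (rule cnf_less_imp_mset_less[OF assms(1)])

lemma ozero_le: "ozero \<le> (b::'a::wellorder)"
  unfolding ozero_def by (rule Least_le) simp

lemma osucc_le: "(a::'a::wellorder) < b \<Longrightarrow> osucc a \<le> b"
  unfolding osucc_def by (rule Least_le)

lemma less_osucc:
  assumes "\<exists>b. (a::'a::wellorder) < b"
  shows "a < osucc a"
  unfolding osucc_def using assms by (rule LeastI_ex)

lemma osucc_le_iff:
  assumes "\<exists>b. (a::'a::wellorder) < b"
  shows "osucc a \<le> c \<longleftrightarrow> a < c"
  using less_osucc[OF assms] osucc_le less_le_trans by blast

text \<open>The exponent raised by \<psi>: the least one, or 0 for \<psi>(0) = \<omega>^1.\<close>

definition psi_base :: "'a::wellorder multiset \<Rightarrow> 'a" where
  "psi_base M = (if M = {#} then ozero else Min (set_mset M))"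

definition psi_mset :: "'a::wellorder multiset \<Rightarrow> 'a multiset" where
  "psi_mset M = add_mset (osucc (psi_base M)) (filter_mset (\<lambda>b. psi_base M < b) M)"

lemma cnf_last_eq_Min:
  assumes "cnf xs" "xs \<noteq> []"
  shows "last xs = Min (set xs)"
proof -
  obtain ys y where xs: "xs = ys @ [y]"
    using assms(2) rev_exhaust by blast
  have "y \<le> x" if "x \<in> set xs" for x
    using assms(1) that by (auto simp: xs cnf_def sorted_wrt_append)
  then show ?thesis
    by (intro Min_eqI[symmetric]) (auto simp: xs)
qed

lemma mset_psi:
  assumes no_max: "\<forall>a::'a::wellorder. \<exists>b. a < b" and "cnf (xs::'a list)"
  shows "mset (psi xs) = psi_mset (mset xs)"
proof (cases "xs = []")
  case True
  then show ?thesis by (simp add: psi_def psi_mset_def psi_base_def)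
next
  case False
  define m where "m = last xs"
  have base: "psi_base (mset xs) = m"
    using cnf_last_eq_Min[OF assms(2) False] False by (simp add: psi_base_def m_def)
  have xs: "xs = butlast xs @ [m]"
    using False by (simp add: m_def)
  have "filter (\<lambda>c. osucc m \<le> c) (butlast xs) = filter (\<lambda>c. m < c) (butlast xs)"
    using osucc_le_iff[OF spec[OF no_max]] by simp
  moreover have "filter_mset (\<lambda>b. m < b) (mset xs) = mset (filter (\<lambda>c. m < c) (butlast xs))"
    by (subst xs) simp
  ultimately show ?thesis
    using False by (simp add: psi_def psi_mset_def base cnf_plus_def m_def)
qed

section \<open>Coding multisets in HF\<close>

lemma multiset_eq_iff_less_count: "M = N \<longleftrightarrow> (\<forall>a i. i < count M a \<longleftrightarrow> i < count N a)"
  by (metis multiset_eqI less_irrefl nat_neq_iff)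

lemma ex_nat_between: "(\<exists>j::nat. j < n \<and> \<not> j < m) \<longleftrightarrow> m < n"
  by (auto intro: exI[of _ m])

lemma ex_less_count_iff: "(\<exists>i. i < count M a) \<longleftrightarrow> a \<in># M"
  by (metis count_greater_zero_iff ex_nat_between not_less_zero)

lemma less_count_imp_in: "i < count M a \<Longrightarrow> a \<in># M"
  using ex_less_count_iff[of M a] by blast

lemma hf_at_iff: "hf_at x \<longleftrightarrow> (\<exists>a. x = Atom a)"
  by (cases x) auto

lemma hf_less_iff: "hf_less x y \<longleftrightarrow> (\<exists>a b. x = Atom a \<and> y = Atom b \<and> a < b)"
  by (cases x; cases y) auto

lemma hf_eqI:
  assumes "\<not> hf_at X" "\<not> hf_at Y" "\<And>z. hf_mem z X \<longleftrightarrow> hf_mem z Y"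
  shows "X = Y"
  using assms by (cases X; cases Y) (auto simp: fset_eqI)

fun token :: "'a \<Rightarrow> nat \<Rightarrow> 'a hf" where
  "token a 0 = HSet {|Atom a|}"
| "token a (Suc i) = HSet {|Atom a, token a i|}"

lemma hf_at_token [simp]: "\<not> hf_at (token a i)"
  by (cases i) auto

lemma Atom_neq_token [simp]: "Atom b \<noteq> token a i" "token a i \<noteq> Atom b"
  by (cases i; simp)+

lemma hf_mem_token: "hf_mem u (token a i) \<longleftrightarrow> u = Atom a \<or> (0 < i \<and> u = token a (i - 1))"
  by (cases i) auto

lemma token_eq_iff [simp]: "token a i = token b j \<longleftrightarrow> a = b \<and> i = j"
proof
  assume eq: "token a i = token b j"
  have "hf_mem (Atom a) (token b j)"
    unfolding eq[symmetric] by (simp add: hf_mem_token)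
  then have "a = b"
    by (auto simp: hf_mem_token)
  moreover have "i = j"
    using eq unfolding \<open>a = b\<close>
  proof (induction i arbitrary: j)
    case 0
    then show ?case
      by (cases j) auto
  next
    case (Suc i)
    have "hf_mem (token b i) (token b j)"
      unfolding Suc.prems[symmetric] by simp
    then have "0 < j" "token b i = token b (j - 1)"
      by (auto simp: hf_mem_token)
    then show ?case
      using Suc.IH by fastforce
  qed
  ultimately show "a = b \<and> i = j" ..
qed simp

definition mset_code :: "'a multiset \<Rightarrow> 'a hf" where
  "mset_code M = HSet (Abs_fset ((\<lambda>(a, i). token a i) ` (SIGMA a:set_mset M. {..<count M a})))"

lemma hf_mem_mset_code: "hf_mem z (mset_code M) \<longleftrightarrow> (\<exists>a i. z = token a i \<and> i < count M a)"
  by (auto simp: mset_code_def Abs_fset_inverse count_inI)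

lemma token_mem_mset_code [simp]: "hf_mem (token a i) (mset_code M) \<longleftrightarrow> i < count M a"
  by (auto simp: hf_mem_mset_code)

lemma hf_at_mset_code [simp]: "\<not> hf_at (mset_code M)"
  by (simp add: mset_code_def)

lemma all_mem_mset_code:
  "(\<forall>z. hf_mem z (mset_code M) \<longrightarrow> P z) \<longleftrightarrow> (\<forall>a i. i < count M a \<longrightarrow> P (token a i))"
  by (auto simp: hf_mem_mset_code)

lemma ex_mem_mset_code:
  "(\<exists>z. hf_mem z (mset_code M) \<and> P z) \<longleftrightarrow> (\<exists>a i. i < count M a \<and> P (token a i))"
  by (auto simp: hf_mem_mset_code)

lemma mset_code_no_member_iff: "(\<forall>z. \<not> hf_mem z (mset_code M)) \<longleftrightarrow> M = {#}"
  by (simp add: hf_mem_mset_code) (metis count_empty multiset_eqI neq0_conv not_less_zero)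

lemma inj_mset_code: "inj mset_code"
  by (intro injI) (metis multiset_eq_iff_less_count token_mem_mset_code)

definition token_like :: "'a hf \<Rightarrow> 'a hf \<Rightarrow> bool" where
  "token_like X t \<longleftrightarrow> \<not> hf_at t \<and> (\<exists>a. hf_mem a t \<and> hf_at a) \<and>
    (\<forall>a b. hf_mem a t \<and> hf_at a \<and> hf_mem b t \<and> hf_at b \<longrightarrow> a = b) \<and>
    (\<forall>u w. hf_mem u t \<and> \<not> hf_at u \<and> hf_mem w t \<and> \<not> hf_at w \<longrightarrow> u = w) \<and>
    (\<forall>u. hf_mem u t \<and> \<not> hf_at u \<longrightarrow> hf_mem u X \<and> (\<forall>a. hf_mem a t \<and> hf_at a \<longrightarrow> hf_mem a u))"

definition is_mset_code :: "'a hf \<Rightarrow> bool" where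
  "is_mset_code X \<longleftrightarrow> \<not> hf_at X \<and> (\<forall>t. hf_mem t X \<longrightarrow> token_like X t)"

lemma is_mset_code_mset_code: "is_mset_code (mset_code M)"
  unfolding is_mset_code_def token_like_def by (auto simp: hf_mem_mset_code hf_mem_token)

lemma token_likeE:
  assumes "token_like X t"
  obtains a where "t = HSet {|Atom a|}"
    | a u where "t = HSet {|Atom a, u|}" "\<not> hf_at u" "hf_mem u X" "hf_mem (Atom a) u"
proof -
  obtain s where t: "t = HSet s"
    using assms by (cases t) (simp_all add: token_like_def)
  have ex_atom: "\<exists>x. x |\<in>| s \<and> hf_at x"
    and atom_unique: "\<And>x y. x |\<in>| s \<Longrightarrow> hf_at x \<Longrightarrow> y |\<in>| s \<Longrightarrow> hf_at y \<Longrightarrow> x = y"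
    and set_unique: "\<And>u w. u |\<in>| s \<Longrightarrow> \<not> hf_at u \<Longrightarrow> w |\<in>| s \<Longrightarrow> \<not> hf_at w \<Longrightarrow> u = w"
    and set_down: "\<And>u x. u |\<in>| s \<Longrightarrow> \<not> hf_at u \<Longrightarrow> x |\<in>| s \<Longrightarrow> hf_at x \<Longrightarrow> hf_mem u X \<and> hf_mem x u"
    using assms unfolding token_like_def t hf_mem.simps by blast+
  obtain a where a: "Atom a |\<in>| s"
    using ex_atom by (auto simp: hf_at_iff)
  have atoms: "y = Atom a" if "y |\<in>| s" "hf_at y" for y
    using atom_unique[OF that a] by simp
  show ?thesis
  proof (cases "\<exists>u. u |\<in>| s \<and> \<not> hf_at u")
    case True
    then obtain u where u: "u |\<in>| s" "\<not> hf_at u" by blast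
    have "s = {|Atom a, u|}"
    proof (rule fset_eqI)
      show "y |\<in>| s \<longleftrightarrow> y |\<in>| {|Atom a, u|}" for y
        using a u atoms[of y] set_unique[of y u] by (cases "hf_at y") auto
    qed
    then show ?thesis
      using that(2) t u set_down[OF u a] by simp
  next
    case False
    then have "y |\<in>| s \<longleftrightarrow> y = Atom a" for y
      using a atoms by blast
    then have "s = {|Atom a|}"
      by (simp add: fset_eq_iff)
    then show ?thesis
      using that(1) t by blast
  qed
qed

lemma is_mset_code_member_token:
  assumes "is_mset_code X" "hf_mem t X"
  shows "\<exists>a i. t = token a i"
proof -
  have members: "token_like X t" if "hf_mem t X" for t
    using assms(1) that unfolding is_mset_code_def by blast
  show ?thesis
    using assms(2)
  proof (induction t rule: hf.induct)
    case (Atom a)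
    then show ?case
      using members[of "Atom a"] by (simp add: token_like_def)
  next
    case (HSet s)
    from members[OF HSet.prems] show ?case
    proof (cases rule: token_likeE)
      case (1 a)
      then have "HSet s = token a 0" by simp
      then show ?thesis by blast
    next
      case (2 a u)
      then obtain b j where "u = token b j"
        using HSet.IH[of u] by auto
      with 2 have "HSet s = token a (Suc j)"
        by (simp add: hf_mem_token)
      then show ?thesis by blast
    qed
  qed
qed

lemma is_mset_code_token_pred:
  assumes "is_mset_code X" "hf_mem (token a (Suc i)) X"
  shows "hf_mem (token a i) X"
proof -
  have "token_like X (token a (Suc i))"
    using assms unfolding is_mset_code_def by blast
  moreover have "hf_mem (token a i) (token a (Suc i))"
    by (simp add: hf_mem_token)
  ultimately show ?thesis
    unfolding token_like_def by (meson hf_at_token)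
qed

lemma is_mset_code_token_le:
  assumes "is_mset_code X" "hf_mem (token a i) X" "j \<le> i"
  shows "hf_mem (token a j) X"
  using assms(3,2)
  by (induction rule: dec_induct) (use is_mset_code_token_pred[OF assms(1)] in blast)+

lemma finite_down_closed_eq_lessThan:
  fixes D :: "nat set"
  assumes "finite D" "\<And>i j. i \<in> D \<Longrightarrow> j \<le> i \<Longrightarrow> j \<in> D"
  shows "D = {..<card D}"
proof -
  have "i < card D" if "i \<in> D" for i
  proof -
    have "{..i} \<subseteq> D"
      using assms(2) that by blast
    from card_mono[OF assms(1) this] show ?thesis
      by simp
  qed
  then show ?thesis
    by (intro card_subset_eq) auto
qed

lemma is_mset_code_iff: "is_mset_code X \<longleftrightarrow> (\<exists>M. X = mset_code M)"
proof
  assume X: "is_mset_code X"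
  define c where "c a = card {i. hf_mem (token a i) X}" for a
  have finite_members: "finite {t. hf_mem t X}"
    using X by (cases X) (auto simp: is_mset_code_def)
  have finite_copies: "finite {i. hf_mem (token a i) X}" for a
    by (rule finite_vimageI[OF finite_members, of "token a", simplified]) (simp add: inj_def)
  have copies: "hf_mem (token a i) X \<longleftrightarrow> i < c a" for a i
    using finite_down_closed_eq_lessThan[OF finite_copies]
      is_mset_code_token_le[OF X] unfolding c_def by blast
  have "finite {a. 0 < c a}"
    using finite_vimageI[OF finite_members, of "\<lambda>a. token a 0"]
    by (rule finite_subset[rotated]) (auto simp: copies[symmetric] inj_def)
  then have count_M: "count (Abs_multiset c) = c"
    by (simp add: count_Abs_multiset)
  have "X = mset_code (Abs_multiset c)"
  proof (rule hf_eqI)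
    show "hf_mem z X \<longleftrightarrow> hf_mem z (mset_code (Abs_multiset c))" for z
    proof (cases "\<exists>a i. z = token a i")
      case True
      then show ?thesis
        by (auto simp: count_M copies)
    next
      case False
      then show ?thesis
        using is_mset_code_member_token[OF X, of z] by (auto simp: hf_mem_mset_code)
    qed
  qed (use X in \<open>simp_all add: is_mset_code_def\<close>)
  then show "\<exists>M. X = mset_code M" ..
qed (auto simp: is_mset_code_mset_code)

section \<open>The order and \<psi> on codes\<close>

text \<open>The Huet-Oppen form of the multiset order, read on tokens.\<close>

definition code_less :: "'a::ord hf \<Rightarrow> 'a hf \<Rightarrow> bool" where
  "code_less X Y \<longleftrightarrow> X \<noteq> Y \<and> (\<forall>z. hf_mem z X \<longrightarrow> \<not> hf_mem z Y \<longrightarrow>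
     (\<exists>w. hf_mem w Y \<and> \<not> hf_mem w X \<and> (\<exists>p. hf_mem p w \<and> (\<exists>q. hf_mem q z \<and> hf_less q p))))"

lemma exponent_less_token:
  "(\<exists>p. hf_mem p (token b j) \<and> (\<exists>q. hf_mem q (token a i) \<and> hf_less q p)) \<longleftrightarrow> a < b"
  by (auto simp: hf_mem_token hf_less_iff)

lemma code_less_mset_code: "code_less (mset_code M) (mset_code N) \<longleftrightarrow> M < N"
proof -
  have "code_less (mset_code M) (mset_code N) \<longleftrightarrow> M \<noteq> N \<and>
      (\<forall>a i. i < count M a \<longrightarrow> \<not> i < count N a \<longrightarrow>
        (\<exists>b j. j < count N b \<and> \<not> j < count M b \<and> a < b))"
    unfolding code_less_def
    by (simp add: inj_eq[OF inj_mset_code] all_mem_mset_code ex_mem_mset_code exponent_less_token)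
  also have "\<dots> \<longleftrightarrow> M \<noteq> N \<and> (\<forall>a. count N a < count M a \<longrightarrow> (\<exists>b. a < b \<and> count M b < count N b))"
    using ex_nat_between by blast
  also have "\<dots> \<longleftrightarrow> M < N"
    by (simp add: less_multiset\<^sub>H\<^sub>O)
  finally show ?thesis .
qed

definition psi_base_atom :: "'a::ord hf \<Rightarrow> 'a hf \<Rightarrow> bool" where
  "psi_base_atom S m \<longleftrightarrow> hf_at m \<and> (\<forall>z. hf_mem z S \<longrightarrow> (\<forall>q. hf_mem q z \<longrightarrow> \<not> hf_less q m)) \<and>
     ((\<exists>z. hf_mem z S \<and> hf_mem m z) \<or> ((\<forall>z. \<not> hf_mem z S) \<and> (\<forall>c. hf_at c \<longrightarrow> \<not> hf_less c m)))"

definition successor_atom :: "'a::ord hf \<Rightarrow> 'a hf \<Rightarrow> bool" where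
  "successor_atom m s \<longleftrightarrow> hf_at s \<and> hf_less m s \<and> (\<forall>c. hf_less m c \<longrightarrow> \<not> hf_less c s)"

definition fresh_token :: "'a hf \<Rightarrow> 'a hf \<Rightarrow> 'a hf \<Rightarrow> bool" where
  "fresh_token S s z \<longleftrightarrow> hf_mem s z \<and> \<not> hf_mem z S \<and> (\<forall>u. hf_mem u z \<longrightarrow> \<not> hf_at u \<longrightarrow> hf_mem u S)"

text \<open>T consists of the tokens of S whose exponent is above the base m, together with the next
  copy of the successor s of m, which is the only token satisfying \<open>fresh_token S s\<close>.\<close>

definition code_psi :: "'a::ord hf \<Rightarrow> 'a hf \<Rightarrow> bool" where
  "code_psi S T \<longleftrightarrow> (\<exists>m s. psi_base_atom S m \<and> successor_atom m s \<and>
     (\<forall>z. hf_mem z T \<longrightarrow> (hf_mem z S \<and> (\<exists>q. hf_mem q z \<and> hf_less m q)) \<or> fresh_token S s z) \<and>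
     (\<forall>z. hf_mem z S \<longrightarrow> (\<exists>q. hf_mem q z \<and> hf_less m q) \<longrightarrow> hf_mem z T) \<and>
     (\<exists>z. hf_mem z T \<and> fresh_token S s z))"

lemma psi_base_atom_mset_code: "psi_base_atom (mset_code M) m \<longleftrightarrow> m = Atom (psi_base M)"
proof (cases "M = {#}")
  case True
  then show ?thesis
    by (cases m) (auto simp: psi_base_atom_def psi_base_def hf_mem_mset_code hf_at_iff
        hf_less_iff not_less intro: order.antisym ozero_le)
next
  case False
  have "psi_base_atom (mset_code M) m \<longleftrightarrow> (\<exists>a. m = Atom a \<and> a \<in># M \<and> (\<forall>b\<in>#M. \<not> b < a))"
    using False
    by (auto simp: psi_base_atom_def all_mem_mset_code ex_mem_mset_code hf_mem_token hf_at_iff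
        hf_less_iff ex_less_count_iff mset_code_no_member_iff less_count_imp_in)
  also have "\<dots> \<longleftrightarrow> m = Atom (psi_base M)"
    using False by (auto simp: psi_base_def not_less intro!: Min_eqI[symmetric])
  finally show ?thesis .
qed

lemma successor_atom_Atom:
  assumes "\<exists>b. (a::'a::wellorder) < b"
  shows "successor_atom (Atom a) s \<longleftrightarrow> s = Atom (osucc a)"
proof
  assume "successor_atom (Atom a) s"
  then obtain b where "s = Atom b" "a < b" "\<not> osucc a < b"
    using less_osucc[OF assms] by (auto simp: successor_atom_def hf_at_iff hf_less_iff)
  then show "s = Atom (osucc a)"
    using osucc_le[of a b] by simp
next
  assume "s = Atom (osucc a)"
  then show "successor_atom (Atom a) s"
    using less_osucc[OF assms] osucc_le by (auto simp: successor_atom_def hf_less_iff not_less)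
qed

lemma fresh_token_mset_code:
  "fresh_token (mset_code M) (Atom s) (token b i) \<longleftrightarrow> b = s \<and> i = count M s"
  by (auto simp: fresh_token_def hf_mem_token)

lemma exponent_above_token: "(\<exists>q. hf_mem q (token b i) \<and> hf_less (Atom a) q) \<longleftrightarrow> a < b"
  by (auto simp: hf_mem_token hf_less_iff)

lemma less_count_psi_mset:
  assumes "\<exists>b. psi_base M < b"
  shows "i < count (psi_mset M) b \<longleftrightarrow>
    (i < count M b \<and> psi_base M < b) \<or> (b = osucc (psi_base M) \<and> i = count M b)"
  using less_osucc[OF assms] by (auto simp: psi_mset_def)

lemma code_psi_mset_code:
  assumes no_max: "\<forall>a::'a::wellorder. \<exists>b. a < b"
  shows "code_psi (mset_code M) (mset_code (N::'a multiset)) \<longleftrightarrow> N = psi_mset M"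
proof -
  define a s where "a = psi_base M" and "s = osucc (psi_base M)"
  have "code_psi (mset_code M) (mset_code N) \<longleftrightarrow>
      (\<forall>b i. i < count N b \<longrightarrow> (i < count M b \<and> a < b) \<or> (b = s \<and> i = count M s)) \<and>
      (\<forall>b i. i < count M b \<longrightarrow> a < b \<longrightarrow> i < count N b) \<and>
      (\<exists>i. i < count N s \<and> i = count M s)"
    unfolding code_psi_def a_def s_def
    by (simp add: psi_base_atom_mset_code successor_atom_Atom no_max all_mem_mset_code
        ex_mem_mset_code fresh_token_mset_code exponent_above_token)
  also have "\<dots> \<longleftrightarrow> (\<forall>b i. i < count N b \<longleftrightarrow> i < count (psi_mset M) b)"
    unfolding less_count_psi_mset[OF spec[OF no_max]] a_def s_def by blast
  also have "\<dots> \<longleftrightarrow> N = psi_mset M"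
    by (rule multiset_eq_iff_less_count[symmetric])
  finally show ?thesis .
qed

definition cnf_code :: "'a::linorder list \<Rightarrow> 'a hf" where
  "cnf_code xs = mset_code (mset xs)"

definition cnf_set_code :: "'a::linorder list set \<Rightarrow> 'a hf" where
  "cnf_set_code S = HSet (Abs_fset (cnf_code ` S))"

definition is_set_code :: "'a hf \<Rightarrow> bool" where
  "is_set_code X \<longleftrightarrow> \<not> hf_at X \<and> (\<forall>z. hf_mem z X \<longrightarrow> is_mset_code z)"

lemma inj_on_cnf_code: "inj_on cnf_code omega_pow"
  by (auto intro!: inj_onI cnf_eqI_mset simp: cnf_code_def omega_pow_def inj_eq[OF inj_mset_code])

lemma is_mset_code_iff_cnf_code: "is_mset_code X \<longleftrightarrow> (\<exists>x\<in>omega_pow. X = cnf_code x)"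
  unfolding is_mset_code_iff cnf_code_def omega_pow_def by (metis ex_cnf_mset mem_Collect_eq)

lemma hf_mem_cnf_set_code: "finite S \<Longrightarrow> hf_mem z (cnf_set_code S) \<longleftrightarrow> z \<in> cnf_code ` S"
  by (simp add: cnf_set_code_def Abs_fset_inverse)

lemma hf_at_cnf_set_code [simp]: "\<not> hf_at (cnf_set_code S)"
  by (simp add: cnf_set_code_def)

lemma inj_on_cnf_set_code: "inj_on cnf_set_code {S. finite S \<and> S \<subseteq> omega_pow}"
proof (rule inj_onI)
  fix S T
  assume S: "S \<in> {S. finite S \<and> S \<subseteq> omega_pow}" and T: "T \<in> {S. finite S \<and> S \<subseteq> omega_pow}"
    and "cnf_set_code S = cnf_set_code T"
  then have "cnf_code ` S = cnf_code ` T"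
    by (auto simp: set_eq_iff hf_mem_cnf_set_code[symmetric])
  then show "S = T"
    using inj_on_image_eq_iff[OF inj_on_cnf_code] S T by blast
qed

lemma is_set_code_iff_cnf_set_code:
  "is_set_code X \<longleftrightarrow> (\<exists>S. finite S \<and> S \<subseteq> omega_pow \<and> X = cnf_set_code S)"
proof
  assume X: "is_set_code X"
  then obtain s where s: "X = HSet s"
    by (cases X) (auto simp: is_set_code_def)
  define S where "S = {x \<in> omega_pow. cnf_code x |\<in>| s}"
  have image: "cnf_code ` S = fset s"
    using X by (auto simp: S_def s is_set_code_def is_mset_code_iff_cnf_code)
  have "inj_on cnf_code S"
    by (rule inj_on_subset[OF inj_on_cnf_code]) (auto simp: S_def)
  then have "finite S"
    using finite_imageD[of cnf_code S] image by simp
  moreover have "X = cnf_set_code S"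
    by (simp add: s cnf_set_code_def image fset_inverse)
  moreover have "S \<subseteq> omega_pow"
    by (auto simp: S_def)
  ultimately show "\<exists>S. finite S \<and> S \<subseteq> omega_pow \<and> X = cnf_set_code S"
    by blast
next
  assume "\<exists>S. finite S \<and> S \<subseteq> omega_pow \<and> X = cnf_set_code S"
  then obtain S where "finite S" "S \<subseteq> omega_pow" "X = cnf_set_code S"
    by blast
  then show "is_set_code X"
    by (auto simp: is_set_code_def hf_mem_cnf_set_code is_mset_code_iff_cnf_code)
qed

lemma code_less_cnf_code_iff:
  "x \<in> omega_pow \<Longrightarrow> y \<in> omega_pow \<Longrightarrow> code_less (cnf_code x) (cnf_code y) \<longleftrightarrow> cnf_less x y"
  by (simp add: cnf_code_def code_less_mset_code cnf_less_iff_mset_less omega_pow_def)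

lemma code_less_codes_iff:
  "is_mset_code X \<and> is_mset_code Y \<and> code_less X Y \<longleftrightarrow>
    (\<exists>x y. X = cnf_code x \<and> Y = cnf_code y \<and> x \<in> omega_pow \<and> y \<in> omega_pow \<and> cnf_less x y)"
  unfolding is_mset_code_iff_cnf_code using code_less_cnf_code_iff by blast

lemma code_psi_cnf_code_iff:
  assumes "\<forall>a::'a::wellorder. \<exists>b. a < b" "x \<in> omega_pow" "is_mset_code Y"
  shows "code_psi (cnf_code (x::'a list)) Y \<longleftrightarrow> Y = cnf_code (psi x)"
proof -
  obtain N where "Y = mset_code N"
    using assms(3) is_mset_code_iff by blast
  moreover have "cnf_code (psi x) = mset_code (psi_mset (mset x))"
    using assms(1,2) by (simp add: cnf_code_def mset_psi omega_pow_def)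
  ultimately show ?thesis
    by (simp add: cnf_code_def code_psi_mset_code[OF assms(1)] inj_eq[OF inj_mset_code])
qed

lemma code_psi_codes_iff:
  assumes "\<forall>a::'a::wellorder. \<exists>b. a < b"
  shows "is_mset_code X \<and> is_mset_code Y \<and> code_psi X Y \<longleftrightarrow>
    (\<exists>x::'a list. X = cnf_code x \<and> Y = cnf_code (psi x) \<and> x \<in> omega_pow)"
proof
  assume codes: "is_mset_code X \<and> is_mset_code Y \<and> code_psi X Y"
  then obtain x where x: "x \<in> omega_pow" "X = cnf_code x"
    by (auto simp: is_mset_code_iff_cnf_code)
  then show "\<exists>x. X = cnf_code x \<and> Y = cnf_code (psi x) \<and> x \<in> omega_pow"
    using codes code_psi_cnf_code_iff[OF assms x(1)] by blast
next
  assume "\<exists>x. X = cnf_code x \<and> Y = cnf_code (psi x) \<and> x \<in> omega_pow"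
  then obtain x where x: "x \<in> omega_pow" "X = cnf_code x" "Y = cnf_code (psi x)"
    by blast
  moreover have "is_mset_code Y"
    using x by (simp add: cnf_code_def is_mset_code_mset_code)
  ultimately show "is_mset_code X \<and> is_mset_code Y \<and> code_psi X Y"
    using code_psi_cnf_code_iff[OF assms x(1)] by (auto simp: is_mset_code_iff_cnf_code)
qed

lemma cnf_code_mem_cnf_set_code_iff:
  assumes "x \<in> omega_pow" "finite S" "S \<subseteq> omega_pow"
  shows "hf_mem (cnf_code x) (cnf_set_code S) \<longleftrightarrow> x \<in> S"
  using assms inj_on_image_mem_iff[OF inj_on_cnf_code] by (simp add: hf_mem_cnf_set_code)

lemma hf_mem_codes_iff:
  "is_mset_code X \<and> is_set_code Y \<and> hf_mem X Y \<longleftrightarrow>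
    (\<exists>x S. X = cnf_code x \<and> Y = cnf_set_code S \<and> finite S \<and> S \<subseteq> omega_pow \<and> x \<in> S)"
  unfolding is_mset_code_iff_cnf_code is_set_code_iff_cnf_set_code
  using cnf_code_mem_cnf_set_code_iff by blast

section \<open>First-order definitions in HF\<close>

definition fm_imp :: "hf_fm \<Rightarrow> hf_fm \<Rightarrow> hf_fm" where
  "fm_imp \<phi> \<psi> = FNeg (FConj \<phi> (FNeg \<psi>))"

definition fm_or :: "hf_fm \<Rightarrow> hf_fm \<Rightarrow> hf_fm" where
  "fm_or \<phi> \<psi> = FNeg (FConj (FNeg \<phi>) (FNeg \<psi>))"

definition fm_all :: "nat \<Rightarrow> hf_fm \<Rightarrow> hf_fm" where
  "fm_all v \<phi> = FNeg (FEx v (FNeg \<phi>))"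

lemma hf_sat_derived [simp]:
  "hf_sat e (fm_imp \<phi> \<psi>) \<longleftrightarrow> (hf_sat e \<phi> \<longrightarrow> hf_sat e \<psi>)"
  "hf_sat e (fm_or \<phi> \<psi>) \<longleftrightarrow> (hf_sat e \<phi> \<or> hf_sat e \<psi>)"
  "hf_sat e (fm_all v \<phi>) \<longleftrightarrow> (\<forall>x. hf_sat (e(v := x)) \<phi>)"
  by (simp_all add: fm_imp_def fm_or_def fm_all_def)

lemma hf_definable_1I:
  assumes "\<And>e. hf_sat e \<phi> \<longleftrightarrow> P (e 0)" "\<And>X. P X \<longleftrightarrow> [X] \<in> R"
  shows "hf_definable 1 R"
  unfolding hf_definable_def by (rule exI[of _ \<phi>]) (simp add: assms)

lemma hf_definable_2I:
  assumes "\<And>e. hf_sat e \<phi> \<longleftrightarrow> P (e 0) (e 1)" "\<And>X Y. P X Y \<longleftrightarrow> [X, Y] \<in> R"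
  shows "hf_definable 2 R"
  unfolding hf_definable_def by (rule exI[of _ \<phi>]) (simp add: assms numeral_2_eq_2)

text \<open>The variables 10--14 are bound, so the free variable x must be below 10.\<close>

definition token_like_fm :: "nat \<Rightarrow> hf_fm" where
  "token_like_fm x = FConj (FNeg (FAt 10))
    (FConj (FEx 11 (FConj (FMem 11 10) (FAt 11)))
    (FConj (fm_all 11 (fm_all 12
       (fm_imp (FConj (FConj (FMem 11 10) (FAt 11)) (FConj (FMem 12 10) (FAt 12))) (FEq 11 12))))
    (FConj (fm_all 13 (fm_all 14
       (fm_imp (FConj (FConj (FMem 13 10) (FNeg (FAt 13))) (FConj (FMem 14 10) (FNeg (FAt 14))))
         (FEq 13 14))))
    (fm_all 13 (fm_imp (FConj (FMem 13 10) (FNeg (FAt 13)))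
       (FConj (FMem 13 x) (fm_all 11 (fm_imp (FConj (FMem 11 10) (FAt 11)) (FMem 11 13)))))))))"

definition mset_code_fm :: "nat \<Rightarrow> hf_fm" where
  "mset_code_fm x = FConj (FNeg (FAt x)) (fm_all 10 (fm_imp (FMem 10 x) (token_like_fm x)))"

lemma hf_sat_mset_code_fm: "x < 10 \<Longrightarrow> hf_sat e (mset_code_fm x) \<longleftrightarrow> is_mset_code (e x)"
  unfolding mset_code_fm_def token_like_fm_def is_mset_code_def token_like_def by simp

definition set_code_fm :: "nat \<Rightarrow> hf_fm" where
  "set_code_fm x = FConj (FNeg (FAt x)) (fm_all 9 (fm_imp (FMem 9 x) (mset_code_fm 9)))"

lemma hf_sat_set_code_fm: "x < 9 \<Longrightarrow> hf_sat e (set_code_fm x) \<longleftrightarrow> is_set_code (e x)"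
  unfolding set_code_fm_def is_set_code_def by (simp add: hf_sat_mset_code_fm)

definition code_less_fm :: hf_fm where
  "code_less_fm = FConj (FNeg (FEq 0 1))
     (fm_all 2 (fm_imp (FMem 2 0) (fm_imp (FNeg (FMem 2 1))
       (FEx 3 (FConj (FMem 3 1) (FConj (FNeg (FMem 3 0))
          (FEx 4 (FConj (FMem 4 3) (FEx 5 (FConj (FMem 5 2) (FLess 5 4)))))))))))"

lemma hf_sat_code_less_fm: "hf_sat e code_less_fm \<longleftrightarrow> code_less (e 0) (e 1)"
  unfolding code_less_fm_def code_less_def by simp

text \<open>In the formulas for \<psi>, 0 and 1 stand for S and T, and 2, 3, 4 for m, s, z.\<close>

definition psi_base_atom_fm :: hf_fm where
  "psi_base_atom_fm = FConj (FAt 2)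
     (FConj (fm_all 4 (fm_imp (FMem 4 0) (fm_all 5 (fm_imp (FMem 5 4) (FNeg (FLess 5 2))))))
       (fm_or (FEx 4 (FConj (FMem 4 0) (FMem 2 4)))
         (FConj (fm_all 4 (FNeg (FMem 4 0))) (fm_all 5 (fm_imp (FAt 5) (FNeg (FLess 5 2)))))))"

definition successor_atom_fm :: hf_fm where
  "successor_atom_fm =
     FConj (FAt 3) (FConj (FLess 2 3) (fm_all 5 (fm_imp (FLess 2 5) (FNeg (FLess 5 3)))))"

definition fresh_token_fm :: hf_fm where
  "fresh_token_fm = FConj (FMem 3 4) (FConj (FNeg (FMem 4 0))
     (fm_all 5 (fm_imp (FMem 5 4) (fm_imp (FNeg (FAt 5)) (FMem 5 0)))))"

definition exponent_above_fm :: hf_fm where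
  "exponent_above_fm = FEx 5 (FConj (FMem 5 4) (FLess 2 5))"

definition code_psi_fm :: hf_fm where
  "code_psi_fm = FEx 2 (FEx 3 (FConj psi_base_atom_fm (FConj successor_atom_fm
     (FConj (fm_all 4 (fm_imp (FMem 4 1)
        (fm_or (FConj (FMem 4 0) exponent_above_fm) fresh_token_fm)))
     (FConj (fm_all 4 (fm_imp (FMem 4 0) (fm_imp exponent_above_fm (FMem 4 1))))
            (FEx 4 (FConj (FMem 4 1) fresh_token_fm)))))))"

lemma hf_sat_code_psi_fm: "hf_sat e code_psi_fm \<longleftrightarrow> code_psi (e 0) (e 1)"
  unfolding code_psi_fm_def code_psi_def psi_base_atom_fm_def psi_base_atom_def
    successor_atom_fm_def successor_atom_def fresh_token_fm_def fresh_token_def exponent_above_fm_def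
  by simp

lemma hf_definable_cnf_codes: "hf_definable 1 {[cnf_code x] | x. x \<in> omega_pow}"
  by (rule hf_definable_1I[where \<phi> = "mset_code_fm 0" and P = is_mset_code])
    (auto simp: hf_sat_mset_code_fm is_mset_code_iff_cnf_code)

lemma hf_definable_cnf_set_codes: "hf_definable 1 {[cnf_set_code S] | S. finite S \<and> S \<subseteq> omega_pow}"
  by (rule hf_definable_1I[where \<phi> = "set_code_fm 0" and P = is_set_code])
    (auto simp: hf_sat_set_code_fm is_set_code_iff_cnf_set_code)

lemma hf_definable_cnf_less:
  "hf_definable 2 {[cnf_code x, cnf_code y] | x y. x \<in> omega_pow \<and> y \<in> omega_pow \<and> cnf_less x y}"
  by (rule hf_definable_2I[where \<phi> = "FConj (mset_code_fm 0) (FConj (mset_code_fm 1) code_less_fm)"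
        and P = "\<lambda>X Y. is_mset_code X \<and> is_mset_code Y \<and> code_less X Y"])
    (simp_all add: hf_sat_mset_code_fm hf_sat_code_less_fm code_less_codes_iff)

lemma hf_definable_psi:
  assumes "\<forall>a::'a::wellorder. \<exists>b. a < b"
  shows "hf_definable 2 {[cnf_code x, cnf_code (psi x)] | x::'a list. x \<in> omega_pow}"
  by (rule hf_definable_2I[where \<phi> = "FConj (mset_code_fm 0) (FConj (mset_code_fm 1) code_psi_fm)"
        and P = "\<lambda>X Y. is_mset_code X \<and> is_mset_code Y \<and> code_psi X Y"])
    (simp_all add: hf_sat_mset_code_fm hf_sat_code_psi_fm code_psi_codes_iff[OF assms])

lemma hf_definable_cnf_mem:
  "hf_definable 2 {[cnf_code x, cnf_set_code S] | x S. finite S \<and> S \<subseteq> omega_pow \<and> x \<in> S}"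
  by (rule hf_definable_2I[where \<phi> = "FConj (mset_code_fm 0) (FConj (set_code_fm 1) (FMem 0 1))"
        and P = "\<lambda>X Y. is_mset_code X \<and> is_set_code Y \<and> hf_mem X Y"])
    (simp_all add: hf_sat_mset_code_fm hf_sat_set_code_fm hf_mem_codes_iff)

theorem lemma15:
  assumes limit: "\<forall>x::'a::wellorder. \<exists>y. x < y"
  shows "WS_psi_interpretable_in_HF TYPE('a)"
  unfolding WS_psi_interpretable_in_HF_def
  using inj_on_cnf_code inj_on_cnf_set_code hf_definable_cnf_codes hf_definable_cnf_set_codes
    hf_definable_cnf_less hf_definable_psi[OF limit] hf_definable_cnf_mem
  by blast

end
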